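(* Let $T>0$, $0\leq t<T$, $\tau=T-t$, $r\geq 0$, $\sigma>0$, $n\in\mathbb{N}$, and let $S_t>0$ and $M_t>0$ with $M_t\geq S_t$. Put $u=e^{\sigma\sqrt{\tau/n}}$, $d=u^{-1}$, $q=\frac{u-e^{-r\tau/n}}{u-d}$ and $j_0=\frac{\log(M_t/S_t)}{\sigma\sqrt{\tau/n}}$. Let $\Lambda^{j_0}_{j,k,n}$ and $J$ be as in the context, and define the discrete (Cheuk–Vorst) price of the European lookback put with floating strike at time $t$ by \[ P^{fl}_n(t) = S_t \sum_{j\in J} (u^{j}-1)\sum_{k=0}^n \Lambda^{j_0}_{j,k,n}\, (1-q)^{k}q^{n-k}. \] Then $P^{fl}_n(t) = S_t(V_1-V_2+V_3)$, where, with $k_{\min}=n-\lfloor \frac{n+j_0}{2}\rfloor$ and $k_{\max}=k_{\max}(j)=\lfloor\frac{n-\lfloor j_0\rfloor-1+j}{2}\rfloor$, \begin{align*} V_1&=\sum_{k=k_{\min}}^{n}(u^{j_0+2k-n}-1) \binom{n}{k}(1-q)^{k}q^{n-k},\\ V_2&=\sum_{k=k_{\min}}^{n-\lfloor j_0\rfloor-1} (u^{j_0+2k-n}-1)\binom{n}{k+\lfloor j_0\rfloor+1}(1-q)^{k}q^{n-k},\\ V_3&=\sum_{j=0}^{n-\lfloor j_0\rfloor-1}(u^{j}-1) \sum_{k=j}^{k_{\max}}\Big[\binom{n}{k-j}-\binom{n}{k-j-1}\Big] (1-q)^{k}q^{n-k}. \end{align*}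
   Context: Here $S_t$ is the current price of the underlying and $M_t=\max_{t^*\leq t}S_{t^*}$ its running maximum since emission. Consider the directed graph with initial node $(0,j_0)$ in which, from each node $(m,j_m)$ with $0\leq m<n$, there are exactly two edges: an "up" edge to $(m+1,j_m+1)$ and a "down" edge to $(m+1,\max(j_m-1,0))$. $\Lambda^{j_0}_{j,k,n}$ is the number of paths from $(0,j_0)$ to $(n,j)$ with exactly $k$ up jumps, and $J$ is the set of levels $j$ such that $(n,j)$ is reachable from $(0,j_0)$. $\lfloor x\rfloor$ is the integer part; binomial coefficients $\binom{n}{i}$ are $0$ for $i<0$ or $i>n$. *)

theory Defs
  imports Complex_Main
begin

text \<open>Paths in the directed graph: a path of length n from (0,j0) is a list of
  n moves, True = up edge, False = down edge. Levels are real numbers, since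
  j0 = log(M/S)/(sigma*sqrt(tau/n)) need not be an integer.\<close>

fun level :: "real \<Rightarrow> bool list \<Rightarrow> real" where
  "level j [] = j"
| "level j (b # bs) = level (if b then j + 1 else max (j - 1) 0) bs"

definition Lambda :: "real \<Rightarrow> real \<Rightarrow> nat \<Rightarrow> nat \<Rightarrow> nat" where
  "Lambda j0 j k n =
     card {ps :: bool list. length ps = n \<and> count_list ps True = k \<and> level j0 ps = j}"

definition reachJ :: "real \<Rightarrow> nat \<Rightarrow> real set" where
  "reachJ j0 n = {level j0 ps | ps :: bool list. length ps = n}"

definition binom :: "nat \<Rightarrow> int \<Rightarrow> real" where
  "binom n i = (if i < 0 \<or> i > int n then 0 else real (n choose nat i))"

end

theory Submission
  imports Defs
begin

text \<open>A path with k up moves out of n ends at s = 2k - n; let m \<le> 0 be the minimum of its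
  partial sums. The walk reflected at 0 and started at j0 \<ge> 0 ends at max (j0 + s) (s - m).
  So the paths with m \<ge> -\<lfloor>j0\<rfloor> end at j0 + 2k - n, which produces V1 - V2, and all others
  end at the integer level s - m, which produces V3. The counts come from the reflection
  principle: of the paths with k up moves, those whose minimum reaches a level -c < min 0 s
  number binom n (k + c). Finally the sum over J and k is regrouped as a sum over paths.\<close>

fun walk_sum :: "bool list \<Rightarrow> int" where
  "walk_sum [] = 0"
| "walk_sum (b # bs) = (if b then 1 else -1) + walk_sum bs"

fun walk_min :: "bool list \<Rightarrow> int" where
  "walk_min [] = 0"
| "walk_min (b # bs) = min 0 ((if b then 1 else -1) + walk_min bs)"

lemma walk_min_nonpos: "walk_min ps \<le> 0"
  by (cases ps) auto

lemma walk_min_le_walk_sum: "walk_min ps \<le> walk_sum ps"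
  by (induction ps) auto

lemma walk_min_Cons_False: "walk_min (False # bs) = walk_min bs - 1"
  using walk_min_nonpos[of bs] by simp

lemma walk_sum_eq_count: "walk_sum ps = 2 * int (count_list ps True) - int (length ps)"
  by (induction ps) auto

lemma walk_min_ge_count: "int (count_list ps True) - int (length ps) \<le> walk_min ps"
  by (induction ps) (use count_le_length in fastforce)+

text \<open>Skorokhod's reflection formula for the walk reflected at 0.\<close>
lemma level_reflection:
  "x \<ge> 0 \<Longrightarrow> level x ps = max (x + walk_sum ps) (walk_sum ps - walk_min ps)"
proof (induction ps arbitrary: x)
  case (Cons b bs)
  have "walk_min bs \<le> 0" by (rule walk_min_nonpos)
  with Cons show ?case by (cases b) (auto simp: max_def min_def)
qed simp

definition paths :: "nat \<Rightarrow> nat \<Rightarrow> bool list set" where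
  "paths n k = {ps. length ps = n \<and> count_list ps True = k}"

lemma finite_bool_lists_length: "finite {ps :: bool list. length ps = n \<and> P ps}"
proof (rule finite_subset)
  show "finite {ps :: bool list. set ps \<subseteq> UNIV \<and> length ps = n}"
    by (rule finite_lists_length_eq) simp
qed auto

lemma finite_paths [simp]: "finite (paths n k)"
  unfolding paths_def by (rule finite_bool_lists_length)

lemma card_bool_lists_Suc:
  "card {ps :: bool list. length ps = Suc n \<and> P ps}
   = card {bs. length bs = n \<and> P (True # bs)} + card {bs. length bs = n \<and> P (False # bs)}"
proof -
  have "{ps :: bool list. length ps = Suc n \<and> P ps}
     = Cons True ` {bs. length bs = n \<and> P (True # bs)} \<union> Cons False ` {bs. length bs = n \<and> P (False # bs)}"
  proof (rule set_eqI)
    fix ps :: "bool list"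
    show "ps \<in> {ps. length ps = Suc n \<and> P ps} \<longleftrightarrow> ps \<in> Cons True ` {bs. length bs = n \<and> P (True # bs)}
        \<union> Cons False ` {bs. length bs = n \<and> P (False # bs)}"
    proof (cases ps)
      case (Cons b bs)
      then show ?thesis by (cases b) auto
    qed auto
  qed
  then show ?thesis
    by (simp only:) (subst card_Un_disjoint, auto intro: finite_bool_lists_length simp: card_image)
qed

lemma card_paths: "card (paths n k) = n choose k"
proof (induction n arbitrary: k)
  case 0
  have "paths 0 k = (if k = 0 then {[]} else {})" by (auto simp: paths_def)
  then show ?case by simp
next
  case (Suc n)
  show ?case
  proof (cases k)
    case 0
    then show ?thesis using Suc[of 0] by (simp add: paths_def card_bool_lists_Suc)
  next
    case (Suc k')
    then show ?thesis using Suc.IH by (simp add: paths_def card_bool_lists_Suc)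
  qed
qed

lemma binom_of_nat [simp]: "binom n (int m) = real (n choose m)"
  unfolding binom_def by simp

lemma binom_neg: "i < 0 \<Longrightarrow> binom n i = 0"
  unfolding binom_def by simp

lemma binom_Suc: "binom (Suc n) i = binom n (i - 1) + binom n i"
proof (cases "i \<le> 0")
  case True
  then show ?thesis by (cases "i = 0") (simp_all add: binom_neg binom_def)
next
  case False
  define m where "m = nat i - 1"
  have "i = int (Suc m)" and "i - 1 = int m" using False by (simp_all add: m_def)
  then show ?thesis by (simp only: binom_of_nat binomial_Suc_Suc of_nat_add)
qed

lemma binom_symmetric: "binom n i = binom n (int n - i)"
proof (cases "0 \<le> i \<and> i \<le> int n")
  case True
  then obtain m where m: "i = int m" "m \<le> n" by (metis nonneg_int_cases of_nat_le_iff)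
  have "int (n - m) = int n - i" using m by simp
  have "binom n i = real (n choose m)" using m by simp
  also have "\<dots> = real (n choose (n - m))" by (simp only: binomial_symmetric[OF m(2)])
  also have "\<dots> = binom n (int n - i)" by (metis binom_of_nat \<open>int (n - m) = int n - i\<close>)
  finally show ?thesis .
qed (auto simp: binom_def)

lemma card_paths_min_Suc:
  assumes "c \<ge> 1"
  shows "card {ps \<in> paths (Suc n) k. walk_min ps \<le> -c}
    = (case k of 0 \<Rightarrow> 0 | Suc k' \<Rightarrow> card {ps \<in> paths n k'. walk_min ps \<le> -(c + 1)})
      + card {ps \<in> paths n k. walk_min ps \<le> -(c - 1)}"
proof -
  have "walk_min (True # bs) \<le> -c \<longleftrightarrow> walk_min bs \<le> -(c + 1)" for bs
    using assms by auto
  then have up: "card {bs. length bs = n \<and> count_list (True # bs) True = k \<and> walk_min (True # bs) \<le> -c}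
      = (case k of 0 \<Rightarrow> 0 | Suc k' \<Rightarrow> card {ps \<in> paths n k'. walk_min ps \<le> -(c + 1)})"
    by (cases k) (simp_all add: paths_def conj_assoc del: walk_min.simps)
  have down: "walk_min (False # bs) \<le> -c \<longleftrightarrow> walk_min bs \<le> -(c - 1)" for bs
    by (simp add: walk_min_Cons_False del: walk_min.simps) linarith
  show ?thesis
    unfolding paths_def mem_Collect_eq conj_assoc card_bool_lists_Suc up down by simp
qed

text \<open>The reflection principle: reflecting a path after its first visit to -c maps the paths
  counted here onto all paths ending at -2c - (2k - n). The proof below instead checks the
  formula against the Pascal recursion card_paths_min_Suc.\<close>
lemma card_paths_min_reflection:
  assumes "c \<ge> 1"
  shows "real (card {ps \<in> paths n k. walk_min ps \<le> -c})
    = (if c \<le> int n - 2 * int k then real (n choose k) else binom n (int k + c))"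
  using assms
proof (induction n arbitrary: k c)
  case 0
  then have "{ps \<in> paths 0 k. walk_min ps \<le> -c} = {}" by (auto simp: paths_def)
  with 0 show ?case by (simp add: binom_def)
next
  case (Suc n)
  have down: "real (card {ps \<in> paths n k. walk_min ps \<le> -(c - 1)})
      = (if c - 1 \<le> int n - 2 * int k then real (n choose k) else binom n (int k + c - 1))"
  proof (cases "c = 1")
    case True
    then show ?thesis using walk_min_nonpos by (simp add: card_paths)
  next
    case False
    then show ?thesis using Suc.IH[of "c - 1" k] Suc.prems by (simp add: add_diff_eq)
  qed
  show ?case
  proof (cases k)
    case 0
    then show ?thesis using down Suc.prems by (auto simp: card_paths_min_Suc binom_def)
  next
    case (Suc k')
    have up: "real (card {ps \<in> paths n k'. walk_min ps \<le> -(c + 1)})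
        = (if c + 1 \<le> int n - 2 * int k' then real (n choose k') else binom n (int k' + c + 1))"
      using Suc.IH[of "c + 1" k'] Suc.prems by (simp add: add.assoc)
    have "real (card {ps \<in> paths (Suc n) k. walk_min ps \<le> -c})
        = real (card {ps \<in> paths n k'. walk_min ps \<le> -(c + 1)})
          + real (card {ps \<in> paths n k. walk_min ps \<le> -(c - 1)})"
      using Suc Suc.prems by (simp add: card_paths_min_Suc)
    also have "\<dots> = (if c \<le> int (Suc n) - 2 * int k then real (Suc n choose k) else binom (Suc n) (int k + c))"
      unfolding up down using Suc Suc.prems binom_Suc[of n "int k + c"]
      by (auto simp: binom_of_nat[symmetric] algebra_simps simp del: binom_of_nat)
    finally show ?thesis .
  qed
qed

lemma card_paths_min_eq:
  assumes "0 \<le> j" and "2 * int k - int n < j"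
  shows "real (card {ps \<in> paths n k. walk_min ps = 2 * int k - int n - j})
    = binom n (int k - j) - binom n (int k - j - 1)"
proof -
  define c where "c = j + int n - 2 * int k"
  have "c \<ge> 1" using assms(2) by (simp add: c_def)
  have "{ps \<in> paths n k. walk_min ps = -c}
      = {ps \<in> paths n k. walk_min ps \<le> -c} - {ps \<in> paths n k. walk_min ps \<le> -(c + 1)}"
    by auto
  moreover have "{ps \<in> paths n k. walk_min ps \<le> -(c + 1)} \<subseteq> {ps \<in> paths n k. walk_min ps \<le> -c}"
    by auto
  ultimately have "real (card {ps \<in> paths n k. walk_min ps = -c})
      = real (card {ps \<in> paths n k. walk_min ps \<le> -c}) - real (card {ps \<in> paths n k. walk_min ps \<le> -(c + 1)})"
    by (simp add: card_Diff_subset card_mono of_nat_diff)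
  also have "real (card {ps \<in> paths n k. walk_min ps \<le> -c}) = binom n (int k - j)"
  proof (cases "j = 0")
    case True
    then show ?thesis using card_paths_min_reflection[of c n k] \<open>c \<ge> 1\<close> by (simp add: c_def)
  next
    case False
    then have "real (card {ps \<in> paths n k. walk_min ps \<le> -c}) = binom n (int k + c)"
      using card_paths_min_reflection[of c n k] \<open>c \<ge> 1\<close> assms(1) by (simp add: c_def)
    also have "\<dots> = binom n (int k - j)"
      by (subst binom_symmetric) (simp add: c_def)
    finally show ?thesis .
  qed
  also have "real (card {ps \<in> paths n k. walk_min ps \<le> -(c + 1)}) = binom n (int k + (c + 1))"
    using \<open>c \<ge> 1\<close> assms(1) card_paths_min_reflection[of "c + 1" n k] by (simp add: c_def)
  also have "\<dots> = binom n (int k - j - 1)"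
    by (subst binom_symmetric) (simp add: c_def algebra_simps)
  finally show ?thesis by (simp add: c_def algebra_simps)
qed

lemma le_floor_half_iff: "k \<le> \<lfloor>x / 2\<rfloor> \<longleftrightarrow> 2 * real_of_int k \<le> x"
  unfolding le_floor_iff by linarith

lemma kmin_le_iff:
  "int n - \<lfloor>(real n + j0) / 2\<rfloor> \<le> int k \<longleftrightarrow> int n - 2 * int k < \<lfloor>j0\<rfloor> + 1"
proof -
  have "int n - int k \<le> \<lfloor>(real n + j0) / 2\<rfloor> \<longleftrightarrow> int n - 2 * int k \<le> \<lfloor>j0\<rfloor>"
    unfolding le_floor_half_iff le_floor_iff by (simp add: algebra_simps)
  then show ?thesis by linarith
qed

lemma sum_paths_unreflected:
  assumes "j0 \<ge> 0"
  shows "(\<Sum>ps\<in>{ps \<in> paths n k. -\<lfloor>j0\<rfloor> \<le> walk_min ps}. u powr level j0 ps - 1)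
    = (if int n - \<lfloor>(real n + j0) / 2\<rfloor> \<le> int k
       then (u powr (j0 + 2 * real_of_int (int k) - real n) - 1)
            * (binom n (int k) - binom n (int k + \<lfloor>j0\<rfloor> + 1))
       else 0)"
proof -
  let ?A = "{ps \<in> paths n k. -\<lfloor>j0\<rfloor> \<le> walk_min ps}"
  let ?B = "{ps \<in> paths n k. walk_min ps \<le> -(\<lfloor>j0\<rfloor> + 1)}"
  have "level j0 ps = j0 + 2 * real_of_int (int k) - real n" if "ps \<in> ?A" for ps
    using that level_reflection[OF assms, of ps] walk_sum_eq_count[of ps]
    by (auto simp: paths_def max_def) linarith+
  then have sum_A: "(\<Sum>ps\<in>?A. u powr level j0 ps - 1)
      = real (card ?A) * (u powr (j0 + 2 * real_of_int (int k) - real n) - 1)"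
    by simp
  have "?A = paths n k - ?B" and "card ?B \<le> card (paths n k)"
    by (auto intro: card_mono)
  then have "real (card ?A) = real (n choose k) - real (card ?B)"
    by (simp add: card_Diff_subset of_nat_diff card_paths)
  also have "\<dots> = (if int n - 2 * int k < \<lfloor>j0\<rfloor> + 1
      then binom n (int k) - binom n (int k + \<lfloor>j0\<rfloor> + 1) else 0)"
    using card_paths_min_reflection[of "\<lfloor>j0\<rfloor> + 1" n k] assms by (simp add: add.assoc)
  finally show ?thesis
    unfolding sum_A kmin_le_iff by simp
qed

lemma sum_paths_reflected:
  assumes "j0 \<ge> 0" and "k \<le> n"
  shows "(\<Sum>ps\<in>{ps \<in> paths n k. walk_min ps \<le> -(\<lfloor>j0\<rfloor> + 1)}. u powr level j0 ps - 1)
    = (\<Sum>j\<in>{0..int n}. if 2 * int k - int n + \<lfloor>j0\<rfloor> + 1 \<le> j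
        then (u powr real_of_int j - 1) * (binom n (int k - j) - binom n (int k - j - 1)) else 0)"
proof -
  let ?B = "{ps \<in> paths n k. walk_min ps \<le> -(\<lfloor>j0\<rfloor> + 1)}"
  define g where "g ps = 2 * int k - int n - walk_min ps" for ps
  have level_B: "level j0 ps = real_of_int (g ps)" if "ps \<in> ?B" for ps
    using that level_reflection[OF assms(1), of ps] walk_sum_eq_count[of ps]
    by (auto simp: paths_def max_def g_def) linarith+
  have "g ps \<in> {0..int n}" if "ps \<in> ?B" for ps
    using that assms(2) walk_min_ge_count[of ps] walk_min_le_walk_sum[of ps] walk_sum_eq_count[of ps]
    by (auto simp: paths_def g_def)
  then have "(\<Sum>ps\<in>?B. u powr level j0 ps - 1)
      = (\<Sum>j\<in>{0..int n}. \<Sum>ps\<in>{ps \<in> ?B. g ps = j}. u powr level j0 ps - 1)"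
    by (intro sum.group[symmetric]) auto
  also have "\<dots> = (\<Sum>j\<in>{0..int n}. real (card {ps \<in> ?B. g ps = j}) * (u powr real_of_int j - 1))"
    by (intro sum.cong) (auto simp: level_B)
  also have "\<dots> = (\<Sum>j\<in>{0..int n}. if 2 * int k - int n + \<lfloor>j0\<rfloor> + 1 \<le> j
        then (u powr real_of_int j - 1) * (binom n (int k - j) - binom n (int k - j - 1)) else 0)"
  proof (intro sum.cong refl)
    fix j assume "j \<in> {0..int n}"
    moreover have "{ps \<in> ?B. g ps = j}
        = (if 2 * int k - int n + \<lfloor>j0\<rfloor> + 1 \<le> j
           then {ps \<in> paths n k. walk_min ps = 2 * int k - int n - j} else {})"
      by (auto simp: g_def)
    moreover have "\<lfloor>j0\<rfloor> \<ge> 0" using assms by simp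
    ultimately show "real (card {ps \<in> ?B. g ps = j}) * (u powr real_of_int j - 1)
        = (if 2 * int k - int n + \<lfloor>j0\<rfloor> + 1 \<le> j
           then (u powr real_of_int j - 1) * (binom n (int k - j) - binom n (int k - j - 1)) else 0)"
      using card_paths_min_eq[of j k n] by (simp del: zero_le_floor)
  qed
  finally show ?thesis .
qed

lemma sum_reachJ_eq_sum_paths:
  "(\<Sum>j\<in>reachJ j0 n. (u powr j - 1) * (\<Sum>k=0..n. real (Lambda j0 j k n) * (1 - q) ^ k * q ^ (n - k)))
   = (\<Sum>k=0..n. (1 - q) ^ k * q ^ (n - k) * (\<Sum>ps\<in>paths n k. u powr level j0 ps - 1))"
proof -
  have reachJ: "reachJ j0 n = level j0 ` {ps. length ps = n}"
    unfolding reachJ_def by auto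
  then have "finite (reachJ j0 n)"
    using finite_bool_lists_length[of n "\<lambda>_. True"] by simp
  have paths_level: "level j0 ` paths n k \<subseteq> reachJ j0 n" for k
    unfolding reachJ paths_def by auto
  have Lambda: "(u powr j - 1) * real (Lambda j0 j k n)
      = (\<Sum>ps\<in>{ps \<in> paths n k. level j0 ps = j}. u powr level j0 ps - 1)" for j k
    by (simp add: Lambda_def paths_def conj_assoc)
  have "(\<Sum>j\<in>reachJ j0 n. (u powr j - 1) * (\<Sum>k=0..n. real (Lambda j0 j k n) * (1 - q) ^ k * q ^ (n - k)))
      = (\<Sum>j\<in>reachJ j0 n. \<Sum>k=0..n. (1 - q) ^ k * q ^ (n - k)
          * (\<Sum>ps\<in>{ps \<in> paths n k. level j0 ps = j}. u powr level j0 ps - 1))"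
    unfolding Lambda[symmetric] by (simp add: sum_distrib_left mult_ac)
  also have "\<dots> = (\<Sum>k=0..n. (1 - q) ^ k * q ^ (n - k)
      * (\<Sum>j\<in>reachJ j0 n. \<Sum>ps\<in>{ps \<in> paths n k. level j0 ps = j}. u powr level j0 ps - 1))"
    by (subst sum.swap) (simp add: sum_distrib_left)
  also have "\<dots> = (\<Sum>k=0..n. (1 - q) ^ k * q ^ (n - k) * (\<Sum>ps\<in>paths n k. u powr level j0 ps - 1))"
    unfolding sum.group[OF finite_paths \<open>finite (reachJ j0 n)\<close> paths_level] ..
  finally show ?thesis .
qed

lemma sum_atLeastAtMost_restrict:
  fixes F :: "int \<Rightarrow> real"
  assumes "\<And>k. a \<le> k \<Longrightarrow> k \<le> b \<Longrightarrow> k < 0 \<Longrightarrow> F k = 0"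
    and "\<And>k. b < k \<Longrightarrow> k \<le> m \<Longrightarrow> F k = 0" and "b \<le> m"
  shows "(\<Sum>k\<in>{a..b}. F k) = (\<Sum>k\<in>{0..m}. if a \<le> k then F k else 0)"
  by (rule sum.mono_neutral_cong) (use assms in auto)

lemma sum_unreflected_eq:
  assumes "j0 \<ge> 0"
  shows "(\<Sum>k\<in>{0..int n}. (1 - q) powi k * q powi (int n - k)
        * (if int n - \<lfloor>(real n + j0) / 2\<rfloor> \<le> k
           then (u powr (j0 + 2 * real_of_int k - real n) - 1) * (binom n k - binom n (k + \<lfloor>j0\<rfloor> + 1))
           else 0))
    = (\<Sum>k\<in>{int n - \<lfloor>(real n + j0) / 2\<rfloor> .. int n}.
         (u powr (j0 + 2 * real_of_int k - real n) - 1) * binom n k * (1 - q) powi k * q powi (int n - k))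
    - (\<Sum>k\<in>{int n - \<lfloor>(real n + j0) / 2\<rfloor> .. int n - \<lfloor>j0\<rfloor> - 1}.
         (u powr (j0 + 2 * real_of_int k - real n) - 1) * binom n (k + \<lfloor>j0\<rfloor> + 1) * (1 - q) powi k * q powi (int n - k))"
proof -
  define kmin where "kmin = int n - \<lfloor>(real n + j0) / 2\<rfloor>"
  have "\<lfloor>j0\<rfloor> \<ge> 0" using assms by simp
  \<comment> \<open>the range of V2 contains no negative index\<close>
  have "False" if "kmin \<le> k" "k \<le> int n - \<lfloor>j0\<rfloor> - 1" "k < 0" for k
  proof -
    have "real_of_int kmin \<le> real_of_int k" "real_of_int k \<le> real n - real_of_int \<lfloor>j0\<rfloor> - 1"
        "real_of_int k < 0"
      using that by simp_all
    moreover have "real_of_int \<lfloor>(real n + j0) / 2\<rfloor> \<le> (real n + j0) / 2" "j0 < real_of_int \<lfloor>j0\<rfloor> + 1"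
      by linarith+
    ultimately show False
      unfolding kmin_def by simp
  qed
  then have V2: "(\<Sum>k\<in>{kmin .. int n - \<lfloor>j0\<rfloor> - 1}.
         (u powr (j0 + 2 * real_of_int k - real n) - 1) * binom n (k + \<lfloor>j0\<rfloor> + 1) * (1 - q) powi k * q powi (int n - k))
      = (\<Sum>k\<in>{0..int n}. if kmin \<le> k then
         (u powr (j0 + 2 * real_of_int k - real n) - 1) * binom n (k + \<lfloor>j0\<rfloor> + 1) * (1 - q) powi k * q powi (int n - k)
         else 0)"
    using \<open>\<lfloor>j0\<rfloor> \<ge> 0\<close>
    by (intro sum_atLeastAtMost_restrict) (auto simp: binom_def simp del: zero_le_floor)
  have V1: "(\<Sum>k\<in>{kmin .. int n}.
         (u powr (j0 + 2 * real_of_int k - real n) - 1) * binom n k * (1 - q) powi k * q powi (int n - k))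
      = (\<Sum>k\<in>{0..int n}. if kmin \<le> k then
         (u powr (j0 + 2 * real_of_int k - real n) - 1) * binom n k * (1 - q) powi k * q powi (int n - k)
         else 0)"
    by (intro sum_atLeastAtMost_restrict) (auto simp: binom_neg)
  show ?thesis
    unfolding kmin_def[symmetric] V1 V2 sum_subtractf[symmetric]
    by (rule sum.cong) (auto simp: algebra_simps)
qed

lemma sum_reflected_eq:
  fixes f :: int
  assumes "f \<ge> 0"
  shows "(\<Sum>k\<in>{0..int n}. (1 - q) powi k * q powi (int n - k)
        * (\<Sum>j\<in>{0..int n}. if 2 * k - int n + f + 1 \<le> j
           then (u powr real_of_int j - 1) * (binom n (k - j) - binom n (k - j - 1)) else 0))
    = (\<Sum>j\<in>{0 .. int n - f - 1}. (u powr real_of_int j - 1) *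
        (\<Sum>k\<in>{j .. \<lfloor>(real n - real_of_int f - 1 + real_of_int j) / 2\<rfloor>}.
           (binom n (k - j) - binom n (k - j - 1)) * (1 - q) powi k * q powi (int n - k)))"
    (is "?L = ?R")
proof -
  define D where "D j k = binom n (k - j) - binom n (k - j - 1)" for j k :: int
  define w where "w k = (1 - q) powi k * q powi (int n - k)" for k :: int
  define T where "T j k = (if 2 * k - int n + f + 1 \<le> j then (u powr real_of_int j - 1) * D j k * w k else 0)"
    for j k :: int
  have range_iff: "k \<le> \<lfloor>(real n - real_of_int f - 1 + real_of_int j) / 2\<rfloor> \<longleftrightarrow> 2 * k - int n + f + 1 \<le> j"
    for j k :: int
    unfolding le_floor_half_iff by linarith
  have D_neg: "D j k = 0" if "k < j" for j k
    using that by (simp add: D_def binom_neg)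
  have T_vanish: "T j k = 0" if "k < j \<or> \<not> 2 * k - int n + f + 1 \<le> j" for j k
    using that D_neg[of k j] by (auto simp: T_def)
  have inner: "(u powr real_of_int j - 1) *
        (\<Sum>k\<in>{j .. \<lfloor>(real n - real_of_int f - 1 + real_of_int j) / 2\<rfloor>}.
           (binom n (k - j) - binom n (k - j - 1)) * (1 - q) powi k * q powi (int n - k))
      = (\<Sum>k\<in>{0..int n}. T j k)" if "j \<in> {0 .. int n - f - 1}" for j
    unfolding sum_distrib_left
  proof (rule sum.mono_neutral_cong)
    show "T j k = 0" if "k \<in> {0..int n} - {j .. \<lfloor>(real n - real_of_int f - 1 + real_of_int j) / 2\<rfloor>}" for k
      using that range_iff[of k j] by (intro T_vanish) auto
    show "(u powr real_of_int j - 1) * ((binom n (k - j) - binom n (k - j - 1)) * (1 - q) powi k * q powi (int n - k)) = 0"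
      if "k \<in> {j .. \<lfloor>(real n - real_of_int f - 1 + real_of_int j) / 2\<rfloor>} - {0..int n}" for k
      using that \<open>j \<in> {0 .. int n - f - 1}\<close> assms range_iff[of k j] by auto
    show "(u powr real_of_int j - 1) * ((binom n (k - j) - binom n (k - j - 1)) * (1 - q) powi k * q powi (int n - k))
        = T j k"
      if "k \<in> {j .. \<lfloor>(real n - real_of_int f - 1 + real_of_int j) / 2\<rfloor>} \<inter> {0..int n}" for k
      using that range_iff[of k j] by (simp add: T_def D_def w_def mult_ac)
  qed simp_all
  have "?R = (\<Sum>j\<in>{0 .. int n - f - 1}. \<Sum>k\<in>{0..int n}. T j k)"
    by (rule sum.cong) (simp_all add: inner)
  also have "\<dots> = (\<Sum>j\<in>{0..int n}. \<Sum>k\<in>{0..int n}. T j k)"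
    by (rule sum.mono_neutral_left) (use assms in \<open>auto intro!: sum.neutral T_vanish\<close>)
  also have "\<dots> = ?L"
    by (subst sum.swap) (auto simp: T_def D_def w_def sum_distrib_left mult_ac intro!: sum.cong)
  finally show ?thesis ..
qed

lemma sum_paths_decomposition:
  assumes "j0 \<ge> 0"
  shows "(\<Sum>k=0..n. (1 - q) ^ k * q ^ (n - k) * (\<Sum>ps\<in>paths n k. u powr level j0 ps - 1))
     = (\<Sum>k\<in>{int n - \<lfloor>(real n + j0) / 2\<rfloor> .. int n}.
            (u powr (j0 + 2 * real_of_int k - real n) - 1) * binom n k
              * (1 - q) powi k * q powi (int n - k))
       - (\<Sum>k\<in>{int n - \<lfloor>(real n + j0) / 2\<rfloor> .. int n - \<lfloor>j0\<rfloor> - 1}.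
            (u powr (j0 + 2 * real_of_int k - real n) - 1) * binom n (k + \<lfloor>j0\<rfloor> + 1)
              * (1 - q) powi k * q powi (int n - k))
       + (\<Sum>j\<in>{0 .. int n - \<lfloor>j0\<rfloor> - 1}.
            (u powr (real_of_int j) - 1) *
            (\<Sum>k\<in>{j .. \<lfloor>(real n - real_of_int \<lfloor>j0\<rfloor> - 1 + real_of_int j) / 2\<rfloor>}.
               (binom n (k - j) - binom n (k - j - 1)) * (1 - q) powi k * q powi (int n - k)))"
    (is "_ = ?V1 - ?V2 + ?V3")
proof -
  define w where "w k = (1 - q) powi k * q powi (int n - k)" for k :: int
  define U where "U k = (if int n - \<lfloor>(real n + j0) / 2\<rfloor> \<le> k
      then (u powr (j0 + 2 * real_of_int k - real n) - 1) * (binom n k - binom n (k + \<lfloor>j0\<rfloor> + 1))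
      else 0)" for k :: int
  define R where "R k = (\<Sum>j\<in>{0..int n}. if 2 * k - int n + \<lfloor>j0\<rfloor> + 1 \<le> j
      then (u powr real_of_int j - 1) * (binom n (k - j) - binom n (k - j - 1)) else 0)" for k :: int
  have paths_split: "(\<Sum>ps\<in>paths n k. u powr level j0 ps - 1) = U (int k) + R (int k)" if "k \<le> n" for k
  proof -
    let ?A = "{ps \<in> paths n k. -\<lfloor>j0\<rfloor> \<le> walk_min ps}"
    let ?B = "{ps \<in> paths n k. walk_min ps \<le> -(\<lfloor>j0\<rfloor> + 1)}"
    have "?A \<union> ?B = paths n k"
      by auto
    moreover have "(\<Sum>ps\<in>?A \<union> ?B. u powr level j0 ps - 1)
        = (\<Sum>ps\<in>?A. u powr level j0 ps - 1) + (\<Sum>ps\<in>?B. u powr level j0 ps - 1)"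
      by (rule sum.union_disjoint) auto
    ultimately have "(\<Sum>ps\<in>paths n k. u powr level j0 ps - 1)
        = (\<Sum>ps\<in>?A. u powr level j0 ps - 1) + (\<Sum>ps\<in>?B. u powr level j0 ps - 1)"
      by simp
    then show ?thesis
      unfolding sum_paths_unreflected[OF assms] sum_paths_reflected[OF assms that] U_def R_def .
  qed
  have w_nat: "w (int k) = (1 - q) ^ k * q ^ (n - k)" if "k \<le> n" for k
    using that by (simp add: w_def power_int_def nat_diff_distrib)
  have "(\<Sum>k=0..n. (1 - q) ^ k * q ^ (n - k) * (\<Sum>ps\<in>paths n k. u powr level j0 ps - 1))
      = (\<Sum>k\<in>{0..int n}. w k * U k) + (\<Sum>k\<in>{0..int n}. w k * R k)"
    by (simp add: sum.atLeast_int_atMost_int_shift[of _ 0, simplified] sum.distrib[symmetric]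
        paths_split w_nat distrib_left)
  also have "\<dots> = ?V1 - ?V2 + ?V3"
    unfolding w_def U_def R_def sum_unreflected_eq[OF assms]
    using sum_reflected_eq[where f = "\<lfloor>j0\<rfloor>" and n = n and q = q and u = u] assms by simp
  finally show ?thesis .
qed

theorem theorem2p3:
  fixes T t \<tau> r \<sigma> S M u d q j0 :: real and n :: nat
  assumes "T > 0" and "0 \<le> t" and "t < T" and "\<tau> = T - t"
    and "r \<ge> 0" and "\<sigma> > 0" and "n \<ge> 1"
    and "S > 0" and "M > 0" and "M \<ge> S"
    and u_def: "u = exp (\<sigma> * sqrt (\<tau> / n))"
    and d_def: "d = inverse u"
    and q_def: "q = (u - exp (- r * \<tau> / n)) / (u - d)"
    and j0_def: "j0 = ln (M / S) / (\<sigma> * sqrt (\<tau> / n))"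
  shows
    "S * (\<Sum>j\<in>reachJ j0 n. (u powr j - 1) *
            (\<Sum>k=0..n. real (Lambda j0 j k n) * (1 - q) ^ k * q ^ (n - k)))
     = S * (
         (\<Sum>k\<in>{int n - \<lfloor>(real n + j0) / 2\<rfloor> .. int n}.
            (u powr (j0 + 2 * real_of_int k - real n) - 1) * binom n k
              * (1 - q) powi k * q powi (int n - k))
       - (\<Sum>k\<in>{int n - \<lfloor>(real n + j0) / 2\<rfloor> .. int n - \<lfloor>j0\<rfloor> - 1}.
            (u powr (j0 + 2 * real_of_int k - real n) - 1) * binom n (k + \<lfloor>j0\<rfloor> + 1)
              * (1 - q) powi k * q powi (int n - k))
       + (\<Sum>j\<in>{0 .. int n - \<lfloor>j0\<rfloor> - 1}.
            (u powr (real_of_int j) - 1) *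
            (\<Sum>k\<in>{j .. \<lfloor>(real n - real_of_int \<lfloor>j0\<rfloor> - 1 + real_of_int j) / 2\<rfloor>}.
               (binom n (k - j) - binom n (k - j - 1)) * (1 - q) powi k * q powi (int n - k))))"
proof -
  have "\<sigma> * sqrt (\<tau> / n) \<ge> 0" and "ln (M / S) \<ge> 0"
    using assms by simp_all
  then have "j0 \<ge> 0"
    unfolding j0_def by simp
  show ?thesis
    unfolding sum_reachJ_eq_sum_paths sum_paths_decomposition[OF \<open>j0 \<ge> 0\<close>] ..
qed

end
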